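(* Assume (A). Let $\psi:H\to\mathbb C$ be the Lévy exponent of $Z$, i.e. the continuous function with $\psi(0)=0$ and $\mathbb E\exp(i\langle y,Z(s)\rangle_H)=\exp(s\psi(y))$ for all $s\ge0$, $y\in H$. Then for every $t>0$ and every $\lambda\in H$, $$\mathbb E\exp\Big(i\Big\langle\lambda,\int_{(0,t]}\mathcal R(t-\tau)\,dZ(\tau)\Big\rangle_H\Big)=\exp\Big(\int_0^t\psi\big(\mathcal R(t-s)^*\lambda\big)\,ds\Big).$$
   Context: $H$ is a real separable Hilbert space with inner product $\langle\cdot,\cdot\rangle_H$; $A$ is a closed densely defined linear operator in $H$, $a\in L^1_{\mathrm{loc}}(\mathbb R_+)$. Assumption (A): the Volterra equation $X(t)=\int_0^t a(t-\tau)AX(\tau)\,d\tau+X_0+Z(t)$ is well-posed with resolvent family $\{\mathcal R(t)\}_{t\ge0}$ (bounded operators, uniformly bounded on compact intervals, strongly continuous, $\mathcal R(0)=I$, satisfying $\mathcal R(t)x=x+\int_0^t a(t-\tau)A\mathcal R(\tau)x\,d\tau$ for $x\in\mathcal D(A)$), the map $t\mapsto\mathcal R(t)$ has bounded variation on compact intervals, and $Z$ is an $H$-valued Lévy process (independent stationary increments, continuous in probability, càdlàg, $Z(0)=0$). The integral $\int_{(0,t]}\mathcal R(t-\tau)\,dZ(\tau)$ is the limit in probability of Riemann–Stieltjes sums $\sum_i\mathcal R(t-s_i)(Z(r_i)-Z(r_{i-1}))$ over partitions $0=r_0<\dots<r_n=t$ with mesh $\to0$, $s_i\in[r_{i-1},r_i]$.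 *)

theory Defs
  imports "HOL-Probability.Probability"
begin

definition is_partition :: "real \<Rightarrow> real \<Rightarrow> nat \<Rightarrow> (nat \<Rightarrow> real) \<Rightarrow> bool" where
  "is_partition a b n r \<longleftrightarrow> 0 < n \<and> r 0 = a \<and> r n = b \<and> (\<forall>i<n. r i < r (Suc i))"

definition mesh :: "nat \<Rightarrow> (nat \<Rightarrow> real) \<Rightarrow> real" where
  "mesh n r = Max ((\<lambda>i. r (Suc i) - r i) ` {..<n})"

definition closed_densely_defined_operator ::
  "('h::real_normed_vector) set \<Rightarrow> ('h \<Rightarrow> 'h) \<Rightarrow> bool" where
  "closed_densely_defined_operator DA A \<longleftrightarrow>
     subspace DA \<and>
     (\<forall>x\<in>DA. \<forall>y\<in>DA. A (x + y) = A x + A y) \<and>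
     (\<forall>x\<in>DA. \<forall>c. A (c *\<^sub>R x) = c *\<^sub>R A x) \<and>
     closure DA = UNIV \<and>
     closed {(x, A x) | x. x \<in> DA}"

definition locally_integrable_Rplus :: "(real \<Rightarrow> real) \<Rightarrow> bool" where
  "locally_integrable_Rplus a \<longleftrightarrow> (\<forall>T\<ge>0. set_integrable lborel {0..T} a)"

definition bv_on_compacts :: "(real \<Rightarrow> 'h \<Rightarrow>\<^sub>L 'h::real_normed_vector) \<Rightarrow> bool" where
  "bv_on_compacts R \<longleftrightarrow> (\<forall>T>0. \<exists>V. \<forall>n r. is_partition 0 T n r \<longrightarrow>
       (\<Sum>i<n. norm (R (r (Suc i)) - R (r i))) \<le> V)"

definition resolvent_family ::
  "(real \<Rightarrow> real) \<Rightarrow> ('h::{real_inner,complete_space,second_countable_topology}) set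
     \<Rightarrow> ('h \<Rightarrow> 'h) \<Rightarrow> (real \<Rightarrow> 'h \<Rightarrow>\<^sub>L 'h) \<Rightarrow> bool" where
  "resolvent_family a DA A R \<longleftrightarrow>
     (\<forall>T\<ge>0. \<exists>C. \<forall>t\<in>{0..T}. norm (R t) \<le> C) \<and>
     (\<forall>x. continuous_on {0..} (\<lambda>t. blinfun_apply (R t) x)) \<and>
     R 0 = id_blinfun \<and>
     (\<forall>t\<ge>0. \<forall>x\<in>DA. blinfun_apply (R t) x \<in> DA) \<and>
     (\<forall>t\<ge>0. \<forall>x\<in>DA.
        set_integrable lborel {0..t} (\<lambda>\<tau>. a (t - \<tau>) *\<^sub>R A (blinfun_apply (R \<tau>) x)) \<and>
        blinfun_apply (R t) x =
          x + (LINT \<tau>:{0..t}|lborel. a (t - \<tau>) *\<^sub>R A (blinfun_apply (R \<tau>) x)))"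

definition levy_process :: "'a measure \<Rightarrow> (real \<Rightarrow> 'a \<Rightarrow> 'h::{real_normed_vector,second_countable_topology}) \<Rightarrow> bool" where
  "levy_process M Z \<longleftrightarrow>
     (\<forall>t\<ge>0. Z t \<in> borel_measurable M) \<and>
     (\<forall>\<omega>\<in>space M. Z 0 \<omega> = 0) \<and>
     \<comment> \<open>independent increments\<close>
     (\<forall>n t. (\<forall>i<n. 0 \<le> t i \<and> t i < t (Suc i)) \<longrightarrow>
        prob_space.indep_vars M (\<lambda>_. borel) (\<lambda>i \<omega>. Z (t (Suc i)) \<omega> - Z (t i) \<omega>) {..<n}) \<and>
     \<comment> \<open>stationary increments\<close>
     (\<forall>s\<ge>0. \<forall>h\<ge>0. distr M borel (\<lambda>\<omega>. Z (s + h) \<omega> - Z s \<omega>) = distr M borel (Z h)) \<and>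
     \<comment> \<open>continuity in probability\<close>
     (\<forall>t\<ge>0. \<forall>\<epsilon>>0. ((\<lambda>s. measure M {\<omega>\<in>space M. \<epsilon> < norm (Z s \<omega> - Z t \<omega>)}) \<longlongrightarrow> 0)
                     (at t within {0..})) \<and>
     \<comment> \<open>cadlag paths\<close>
     (\<forall>\<omega>\<in>space M. \<forall>t\<ge>0. continuous (at_right t) (\<lambda>s. Z s \<omega>)) \<and>
     (\<forall>\<omega>\<in>space M. \<forall>t>0. \<exists>l. ((\<lambda>s. Z s \<omega>) \<longlongrightarrow> l) (at_left t))"

text \<open>I is the stochastic convolution integral over (0,t] of R(t - .) against dZ:
  the limit in probability of the Riemann--Stieltjes sums
  sum_i R(t - s_i)(Z(r_i) - Z(r_{i-1})) as the mesh of the partition tends to 0,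
  for arbitrary tags s_i in [r_{i-1}, r_i].\<close>
definition stoch_conv_integral ::
  "'a measure \<Rightarrow> (real \<Rightarrow> 'h \<Rightarrow>\<^sub>L 'h::{real_normed_vector,second_countable_topology})
     \<Rightarrow> (real \<Rightarrow> 'a \<Rightarrow> 'h) \<Rightarrow> real \<Rightarrow> ('a \<Rightarrow> 'h) \<Rightarrow> bool" where
  "stoch_conv_integral M R Z t I \<longleftrightarrow>
     I \<in> borel_measurable M \<and>
     (\<forall>\<epsilon>>0. \<forall>\<eta>>0. \<exists>\<delta>>0. \<forall>n r s.
        is_partition 0 t n r \<and> mesh n r < \<delta> \<and> (\<forall>i<n. r i \<le> s i \<and> s i \<le> r (Suc i)) \<longrightarrow>
        measure M {\<omega>\<in>space M.
           \<epsilon> < norm ((\<Sum>i<n. blinfun_apply (R (t - s i)) (Z (r (Suc i)) \<omega> - Z (r i) \<omega>)) - I \<omega>)} < \<eta>)"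

end

theory Submission
  imports Defs
begin

text \<open>
  For a partition \<open>0 = r 0 < \<dots> < r n = t\<close> with tags \<open>s i\<close>, the inner product of \<open>\<lambda>\<close>
  with the Riemann--Stieltjes sum \<open>\<Sum>i. R (t - s i) (Z (r (i+1)) - Z (r i))\<close> is
  \<open>\<Sum>i. \<langle>R (t - s i)\<^sup>* \<lambda>, Z (r (i+1)) - Z (r i)\<rangle>\<close>, a sum of independent terms; by stationarity
  of the increments its characteristic function is the exponential of the Riemann sum
  \<open>\<Sum>i. (r (i+1) - r i) \<psi> (R (t - s i)\<^sup>* \<lambda>)\<close>. As the mesh tends to zero, convergence in
  probability of these sums to the stochastic convolution carries over to characteristic
  functions, while the Riemann sums converge to \<open>\<integral>\<^sub>0\<^sup>t \<psi> (R (t - s)\<^sup>* \<lambda>) ds\<close> because \<open>R\<close> is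
  continuous in operator norm: a strongly continuous family of bounded variation cannot jump
  in norm, since a jump would persist, strongly, over infinitely many disjoint intervals.
  The adjoints exist by the Riesz representation theorem, obtained from the projection onto
  a closed convex set.
\<close>

section \<open>Riesz representation and adjoints\<close>

lemma convex_minimizing_sequence_Cauchy:
  fixes K :: "'a::real_inner set"
  assumes "convex K" and kK: "\<And>n. k n \<in> K"
    and d_le: "\<And>y. y \<in> K \<Longrightarrow> d \<le> norm (x - y)^2"
    and k_d: "\<And>n. norm (x - k n)^2 < d + 1 / Suc n"
  shows "Cauchy k"
proof -
  have k_close: "norm (k n - k m)^2 < 2 / Suc n + 2 / Suc m" for n m
  proof -
    have "(k n + k m) /\<^sub>R 2 \<in> K"
      using convexD[OF assms(1) kK kK, of "1/2" "1/2"] by (simp add: scaleR_add_right)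
    then have "d \<le> norm (x - (k n + k m) /\<^sub>R 2)^2"
      by (rule d_le)
    moreover have "norm (k n - k m)^2
        = 2 * norm (x - k n)^2 + 2 * norm (x - k m)^2 - 4 * norm (x - (k n + k m) /\<^sub>R 2)^2"
      unfolding power2_norm_eq_inner by (simp add: algebra_simps inner_commute)
    ultimately show ?thesis
      using k_d[of n] k_d[of m] by linarith
  qed
  show ?thesis
  proof (rule metric_CauchyI)
    fix e :: real assume "0 < e"
    obtain N :: nat where N: "4 / e^2 < N"
      using reals_Archimedean2 by blast
    have "4 < e^2 * N"
      using N \<open>0 < e\<close> by (simp add: divide_less_eq mult.commute)
    also have "\<dots> \<le> e^2 * Suc N"
      by (intro mult_left_mono) auto
    finally have "4 / Suc N < e^2"
      by (simp add: divide_less_eq mult.commute)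
    moreover have le: "2 / Suc n \<le> 2 / Suc N" if "N \<le> n" for n
      using that by (simp add: divide_left_mono)
    ultimately have "norm (k m - k n)^2 < e^2" if "N \<le> m" "N \<le> n" for m n
      using k_close[of m n] le[OF that(1)] le[OF that(2)] by linarith
    then show "\<exists>M. \<forall>m\<ge>M. \<forall>n\<ge>M. dist (k m) (k n) < e"
      using \<open>0 < e\<close> by (metis dist_norm less_le power_less_imp_less_base)
  qed
qed

lemma hilbert_closest_point_exists:
  fixes K :: "'a::{real_inner,complete_space} set"
  assumes "closed K" "convex K" "K \<noteq> {}"
  shows "\<exists>p\<in>K. \<forall>k\<in>K. dist x p \<le> dist x k"
proof -
  define d where "d = Inf ((\<lambda>k. norm (x - k)^2) ` K)"
  have d_le: "d \<le> norm (x - k)^2" if "k \<in> K" for k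
    unfolding d_def by (rule cInf_lower) (use that in \<open>auto intro: bdd_belowI[of _ 0]\<close>)
  have "\<exists>k\<in>K. norm (x - k)^2 < d + 1 / Suc n" for n
    using cInf_lessD[of "(\<lambda>k. norm (x - k)^2) ` K" "d + 1 / Suc n"] assms(3) unfolding d_def by auto
  then obtain k where kK: "\<And>n. k n \<in> K" and k_d: "\<And>n. norm (x - k n)^2 < d + 1 / Suc n"
    by metis
  have "Cauchy k"
    using assms(2) kK d_le k_d by (rule convex_minimizing_sequence_Cauchy)
  then obtain p where kp: "k \<longlonglongrightarrow> p"
    using Cauchy_convergent_iff convergent_def by blast
  have "p \<in> K"
    using closed_sequentially[OF assms(1)] kK kp by blast
  have "(\<lambda>n. norm (x - k n)^2) \<longlonglongrightarrow> norm (x - p)^2"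
    by (intro tendsto_intros kp)
  moreover have "(\<lambda>n. d + 1 / Suc n) \<longlonglongrightarrow> d"
    using tendsto_add[OF tendsto_const LIMSEQ_inverse_real_of_nat, of d] by (simp add: inverse_eq_divide)
  moreover have "\<exists>N. \<forall>n\<ge>N. norm (x - k n)^2 \<le> d + 1 / Suc n"
    using k_d less_imp_le by blast
  ultimately have "norm (x - p)^2 \<le> d"
    by (rule LIMSEQ_le)
  have "norm (x - p) \<le> norm (x - k)" if "k \<in> K" for k
  proof (rule power2_le_imp_le)
    show "norm (x - p)^2 \<le> norm (x - k)^2"
      using \<open>norm (x - p)^2 \<le> d\<close> d_le[OF that] by linarith
  qed simp
  then show ?thesis
    using \<open>p \<in> K\<close> by (auto simp: dist_norm)
qed

lemma closest_point_subspace_orthogonal: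
  fixes K :: "'a::real_inner set"
  assumes "subspace K" "p \<in> K" and p_min: "\<And>k. k \<in> K \<Longrightarrow> dist x p \<le> dist x k" and "k \<in> K"
  shows "(x - p) \<bullet> k = 0"
proof (cases "k = 0")
  case False
  define z where "z = x - p"
  define c where "c = (z \<bullet> k) / (k \<bullet> k)"
  have kk: "0 < k \<bullet> k"
    using False by simp
  have "p + c *\<^sub>R k \<in> K"
    using assms(1,2,4) by (simp add: subspace_add subspace_scale)
  from p_min[OF this] have "norm z ^ 2 \<le> norm (z - c *\<^sub>R k) ^ 2"
    unfolding z_def dist_norm by (simp add: algebra_simps)
  then have "0 \<le> c * c * (k \<bullet> k) - 2 * c * (z \<bullet> k)"
    unfolding power2_norm_eq_inner by (simp add: algebra_simps inner_commute)
  also have "\<dots> = - ((z \<bullet> k)^2) / (k \<bullet> k)"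
    unfolding c_def using kk by (simp add: field_simps power2_eq_square)
  finally show ?thesis
    using kk by (simp add: z_def divide_le_0_iff)
qed simp

lemma riesz_representation:
  fixes g :: "'a::{real_inner,complete_space} \<Rightarrow> real"
  assumes "bounded_linear g"
  shows "\<exists>v. \<forall>x. g x = v \<bullet> x"
proof (cases "\<forall>x. g x = 0")
  case True
  then show ?thesis
    by (intro exI[of _ 0]) simp
next
  case False
  then obtain x0 where "g x0 \<noteq> 0"
    by blast
  interpret g: bounded_linear g
    by fact
  define K where "K = {x. g x = 0}"
  have "subspace K"
    unfolding K_def by (rule linear_subspace_kernel[OF g.linear])
  moreover have "closed K"
    unfolding K_def by (intro closed_Collect_eq g.continuous_on continuous_on_id continuous_on_const)
  ultimately obtain p where "p \<in> K" and p_min: "\<And>k. k \<in> K \<Longrightarrow> dist x0 p \<le> dist x0 k"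
    using hilbert_closest_point_exists[of K x0] subspace_imp_convex subspace_0 by blast
  define z where "z = x0 - p"
  have gz: "g z = g x0"
    using \<open>p \<in> K\<close> unfolding z_def K_def by (simp add: g.diff)
  with \<open>g x0 \<noteq> 0\<close> have "0 < z \<bullet> z"
    by (cases "z = 0") auto
  show ?thesis
  proof (intro exI[of _ "(g z / (z \<bullet> z)) *\<^sub>R z"] allI)
    fix x
    have "x - (g x / g z) *\<^sub>R z \<in> K"
      unfolding K_def using gz \<open>g x0 \<noteq> 0\<close> by (simp add: g.diff g.scaleR)
    from closest_point_subspace_orthogonal[OF \<open>subspace K\<close> \<open>p \<in> K\<close> p_min this]
    have "z \<bullet> x = (g x / g z) * (z \<bullet> z)"
      by (simp add: z_def inner_diff_right)
    then show "g x = (g z / (z \<bullet> z)) *\<^sub>R z \<bullet> x"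
      using \<open>0 < z \<bullet> z\<close> gz \<open>g x0 \<noteq> 0\<close> by (simp add: field_simps)
  qed
qed

lemma blinfun_adjoint_works:
  fixes F :: "'a::{real_inner,complete_space} \<Rightarrow>\<^sub>L 'b::real_inner"
  shows "x \<bullet> adjoint (blinfun_apply F) y = blinfun_apply F x \<bullet> y"
proof -
  have "\<forall>y. \<exists>v. \<forall>x. blinfun_apply F x \<bullet> y = v \<bullet> x"
    by (intro allI riesz_representation bounded_linear_compose[OF bounded_linear_inner_left]
        blinfun.bounded_linear_right)
  then obtain F' where F': "\<And>x y. blinfun_apply F x \<bullet> y = F' y \<bullet> x"
    by metis
  have "adjoint (blinfun_apply F) = F'"
    by (rule adjoint_unique) (metis F' inner_commute)
  then show ?thesis
    by (metis F' inner_commute)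
qed

lemma adjoint_blinfun_eqI:
  fixes F :: "'a::{real_inner,complete_space} \<Rightarrow>\<^sub>L 'b::real_inner"
  assumes "\<And>x. blinfun_apply F x \<bullet> y = x \<bullet> z"
  shows "adjoint (blinfun_apply F) y = z"
proof -
  have "\<forall>x. x \<bullet> adjoint (blinfun_apply F) y = x \<bullet> z"
    by (simp add: blinfun_adjoint_works assms)
  then show ?thesis
    by (simp add: vector_eq_ldot)
qed

lemma norm_adjoint_blinfun_le:
  fixes F :: "'a::{real_inner,complete_space} \<Rightarrow>\<^sub>L 'b::real_inner"
  shows "norm (adjoint (blinfun_apply F) y) \<le> norm F * norm y"
proof -
  define d where "d = adjoint (blinfun_apply F) y"
  have "norm d * norm d = blinfun_apply F d \<bullet> y"
    by (simp add: d_def blinfun_adjoint_works flip: dot_square_norm power2_eq_square)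
  also have "\<dots> \<le> norm (blinfun_apply F d) * norm y"
    by (rule norm_cauchy_schwarz)
  also have "\<dots> \<le> norm F * norm d * norm y"
    by (intro mult_right_mono norm_blinfun norm_ge_zero)
  finally have "norm d * norm d \<le> (norm F * norm y) * norm d"
    by (simp add: ac_simps)
  then have "norm d \<le> norm F * norm y"
    by (cases "d = 0") (auto dest: mult_right_le_imp_le)
  then show ?thesis
    by (simp add: d_def)
qed

lemma bounded_linear_adjoint_blinfun_apply:
  "bounded_linear (\<lambda>F::'a::{real_inner,complete_space} \<Rightarrow>\<^sub>L 'b::real_inner. adjoint (blinfun_apply F) y)"
proof (rule bounded_linear_intro)
  fix F G :: "'a \<Rightarrow>\<^sub>L 'b" and c :: real
  show "adjoint (blinfun_apply (F + G)) y = adjoint (blinfun_apply F) y + adjoint (blinfun_apply G) y"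
    by (rule adjoint_blinfun_eqI) (simp add: blinfun.add_left inner_add blinfun_adjoint_works)
  show "adjoint (blinfun_apply (c *\<^sub>R F)) y = c *\<^sub>R adjoint (blinfun_apply F) y"
    by (rule adjoint_blinfun_eqI) (simp add: blinfun.scaleR_left blinfun_adjoint_works)
  show "norm (adjoint (blinfun_apply F) y) \<le> norm F * norm y"
    by (rule norm_adjoint_blinfun_le)
qed

section \<open>Partitions\<close>

lemma partition_mono:
  assumes "is_partition a b n r" "i \<le> j" "j \<le> n"
  shows "r i \<le> r j"
  using assms(2,3)
proof (induction j)
  case (Suc j)
  show ?case
  proof (cases "i = Suc j")
    case False
    then have "r i \<le> r j"
      using Suc by simp
    also have "\<dots> < r (Suc j)"
      using assms(1) Suc.prems unfolding is_partition_def by simp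
    finally show ?thesis
      by simp
  qed simp
qed simp

lemma partition_range:
  assumes "is_partition a b n r" "i \<le> n"
  shows "a \<le> r i" "r i \<le> b"
  using partition_mono[OF assms(1), of 0 i] partition_mono[OF assms(1), of i n] assms
  unfolding is_partition_def by auto

lemma partition_step_le_mesh:
  assumes "is_partition a b n r" "i < n"
  shows "r (Suc i) - r i \<le> mesh n r"
  unfolding mesh_def using assms by (intro Max_ge) auto

lemma fine_partition_exists:
  assumes "0 < t" "0 < \<delta>"
  shows "\<exists>n r. is_partition 0 t n r \<and> mesh n r < \<delta>"
proof -
  obtain n :: nat where n: "t / \<delta> < n"
    using reals_Archimedean2 by blast
  define r where "r i = real i * t / real (Suc n)" for i
  have step: "r (Suc i) - r i = t / real (Suc n)" for i
    unfolding r_def by (simp add: diff_divide_distrib[symmetric] algebra_simps)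
  have "0 < t / real (Suc n)"
    using assms(1) by simp
  then have "r i < r (Suc i)" for i
    using step[of i] by linarith
  moreover have "r 0 = 0" "r (Suc n) = t"
    by (simp_all add: r_def del: of_nat_Suc)
  ultimately have "is_partition 0 t (Suc n) r"
    unfolding is_partition_def by simp
  moreover have "(\<lambda>i. r (Suc i) - r i) ` {..<Suc n} = {t / real (Suc n)}"
    unfolding step by auto
  then have "mesh (Suc n) r = t / real (Suc n)"
    unfolding mesh_def by simp
  moreover have "t / real (Suc n) < \<delta>"
    using n assms by (simp add: divide_less_eq mult.commute) (simp add: field_simps)
  ultimately have "is_partition 0 t (Suc n) r \<and> mesh (Suc n) r < \<delta>"
    by simp
  then show ?thesis
    by blast
qed

section \<open>Norm continuity of strongly continuous families of bounded variation\<close>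

lemma interval_chain_partition:
  assumes "0 < T" and ab: "\<forall>k<K. 0 < a k \<and> a k < b k \<and> b k < T"
    and chain: "\<forall>k. Suc k < K \<longrightarrow> b k < a (Suc k)"
  obtains r where "is_partition 0 T (2*K+1) r" "\<And>k. k < K \<Longrightarrow> r (2*k+1) = a k \<and> r (2*k+2) = b k"
proof
  define x where "x j = (if even j then a (j div 2) else b (j div 2))" for j
  define r where "r i = (if i = 0 then 0 else if i = 2*K+1 then T else x (i - 1))" for i
  show "r (2*k+1) = a k \<and> r (2*k+2) = b k" if "k < K" for k
    using that by (simp add: r_def x_def)
  show "is_partition 0 T (2*K+1) r"
    unfolding is_partition_def
  proof (intro conjI allI impI)
    fix i assume "i < 2*K+1"
    then consider "i = 0" | "i = 2*K" | j where "i = Suc j" "Suc j < 2*K"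
      by (metis not0_implies_Suc add.commute less_SucE plus_1_eq_Suc)
    then show "r i < r (Suc i)"
    proof cases
      case 1
      then show ?thesis
        using ab \<open>0 < T\<close> by (cases "K = 0") (auto simp: r_def x_def)
    next
      case 2
      then show ?thesis
        using ab \<open>0 < T\<close> by (cases "K = 0") (auto simp: r_def x_def)
    next
      case 3
      then show ?thesis
        using ab chain by (auto simp: r_def x_def elim!: oddE evenE)
    qed
  qed (auto simp: r_def)
qed

lemma bv_disjoint_intervals_sum_le:
  assumes "bv_on_compacts R" "0 < T"
  obtains V where "\<And>K a b. \<forall>k<K. 0 < a k \<and> a k < b k \<and> b k < T \<Longrightarrow> \<forall>k. Suc k < K \<longrightarrow> b k < a (Suc k)
    \<Longrightarrow> (\<Sum>k<K. norm (R (b k) - R (a k))) \<le> V"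
proof -
  obtain V where V: "\<And>n r. is_partition 0 T n r \<Longrightarrow> (\<Sum>i<n. norm (R (r (Suc i)) - R (r i))) \<le> V"
    using assms unfolding bv_on_compacts_def by blast
  have "(\<Sum>k<K. norm (R (b k) - R (a k))) \<le> V"
    if ab: "\<forall>k<K. 0 < a k \<and> a k < b k \<and> b k < T" and chain: "\<forall>k. Suc k < K \<longrightarrow> b k < a (Suc k)"
    for K a b
  proof -
    obtain r where r: "is_partition 0 T (2*K+1) r" and r_ab: "\<And>k. k < K \<Longrightarrow> r (2*k+1) = a k \<and> r (2*k+2) = b k"
      using interval_chain_partition[OF \<open>0 < T\<close> ab chain] by blast
    have "(\<Sum>k<K. norm (R (b k) - R (a k))) = (\<Sum>i\<in>(\<lambda>k. 2*k+1) ` {..<K}. norm (R (r (Suc i)) - R (r i)))"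
      using r_ab by (subst sum.reindex) (auto simp: inj_on_def)
    also have "\<dots> \<le> (\<Sum>i<2*K+1. norm (R (r (Suc i)) - R (r i)))"
      by (rule sum_mono2) auto
    also have "\<dots> \<le> V"
      using r by (rule V)
    finally show ?thesis .
  qed
  then show ?thesis
    using that by blast
qed

lemma bv_finitely_many_large_jumps:
  assumes "bv_on_compacts R" "0 < T" "0 < e"
  obtains N :: nat where "\<And>K a b. \<forall>k<K. 0 < a k \<and> a k < b k \<and> b k < T \<and> e < norm (R (b k) - R (a k))
    \<Longrightarrow> \<forall>k. Suc k < K \<longrightarrow> b k < a (Suc k) \<Longrightarrow> K \<le> N"
proof -
  obtain V where V: "\<And>K a b. \<forall>k<K. 0 < a k \<and> a k < b k \<and> b k < T \<Longrightarrow> \<forall>k. Suc k < K \<longrightarrow> b k < a (Suc k)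
      \<Longrightarrow> (\<Sum>k<K. norm (R (b k) - R (a k))) \<le> V"
    using bv_disjoint_intervals_sum_le[OF assms(1,2)] by blast
  obtain N :: nat where N: "V / e < N"
    using reals_Archimedean2 by blast
  have "K \<le> N"
    if ab: "\<forall>k<K. 0 < a k \<and> a k < b k \<and> b k < T \<and> e < norm (R (b k) - R (a k))"
      and chain: "\<forall>k. Suc k < K \<longrightarrow> b k < a (Suc k)" for K a b
  proof (rule ccontr)
    assume "\<not> K \<le> N"
    then have "N * e \<le> (\<Sum>k<K. e)"
      using assms(3) by simp
    also have "\<dots> \<le> (\<Sum>k<K. norm (R (b k) - R (a k)))"
      using ab by (intro sum_mono) auto
    also have "\<dots> \<le> V"
      using ab chain by (intro V) auto
    finally show False
      using N assms(3) by (simp add: divide_less_eq)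
  qed
  then show ?thesis
    using that by blast
qed

lemma interval_chain_right:
  fixes u m :: real
  assumes "u < m" and room: "\<And>m. u < m \<Longrightarrow> \<exists>a b. u < a \<and> a < b \<and> b < m \<and> P a b"
  shows "\<exists>a b. (\<forall>k<K. u < a k \<and> a k < b k \<and> b k < m \<and> P (a k) (b k))
    \<and> (\<forall>k. Suc k < K \<longrightarrow> b k < a (Suc k))"
proof (induction K)
  case (Suc K)
  then obtain a b where ab: "\<forall>k<K. u < a k \<and> a k < b k \<and> b k < m \<and> P (a k) (b k)"
    and chain: "\<forall>k. Suc k < K \<longrightarrow> b k < a (Suc k)"
    by blast
  define m' where "m' = (if K = 0 then m else a 0)"
  have "u < m'" "m' \<le> m"
    using ab \<open>u < m\<close> by (auto simp: m'_def)
  then obtain a' b' where new: "u < a'" "a' < b'" "b' < m'" "P a' b'"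
    using room by blast
  show ?case
  proof (intro exI conjI allI impI)
    fix k assume "k < Suc K"
    then show "u < case_nat a' a k" "case_nat a' a k < case_nat b' b k"
      "case_nat b' b k < m" "P (case_nat a' a k) (case_nat b' b k)"
      using ab new \<open>m' \<le> m\<close> by (auto split: nat.split)
  next
    fix k assume "Suc k < Suc K"
    then show "case_nat b' b k < case_nat a' a (Suc k)"
      using chain new by (auto simp: m'_def split: nat.split)
  qed
qed simp

lemma interval_chain_left:
  fixes u m :: real
  assumes "m < u" and room: "\<And>m. m < u \<Longrightarrow> \<exists>a b. m < a \<and> a < b \<and> b < u \<and> P a b"
  shows "\<exists>a b. (\<forall>k<K. m < a k \<and> a k < b k \<and> b k < u \<and> P (a k) (b k))
    \<and> (\<forall>k. Suc k < K \<longrightarrow> b k < a (Suc k))"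
proof (induction K)
  case (Suc K)
  then obtain a b where ab: "\<forall>k<K. m < a k \<and> a k < b k \<and> b k < u \<and> P (a k) (b k)"
    and chain: "\<forall>k. Suc k < K \<longrightarrow> b k < a (Suc k)"
    by blast
  define m' where "m' = (if K = 0 then m else b (K - 1))"
  have "m' < u" "m \<le> m'"
    using ab \<open>m < u\<close> by (auto simp: m'_def dest: spec[of _ "K - 1"])
  then obtain a' b' where new: "m' < a'" "a' < b'" "b' < u" "P a' b'"
    using room by blast
  show ?case
  proof (intro exI conjI allI impI)
    fix k assume "k < Suc K"
    then show "m < (a(K := a')) k" "(a(K := a')) k < (b(K := b')) k"
      "(b(K := b')) k < u" "P ((a(K := a')) k) ((b(K := b')) k)"
      using ab new \<open>m \<le> m'\<close> by auto
  next
    fix k assume "Suc k < Suc K"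
    then show "(b(K := b')) k < (a(K := a')) (Suc k)"
      using chain new by (auto simp: m'_def)
  qed
qed simp

lemma eventually_norm_blinfun_gt:
  fixes S :: "'b \<Rightarrow> 'h::real_normed_vector \<Rightarrow>\<^sub>L 'k::real_normed_vector"
  assumes strong: "\<And>x. ((\<lambda>w. blinfun_apply (S w) x) \<longlongrightarrow> blinfun_apply L x) F" and "c < norm L"
  shows "eventually (\<lambda>w. c < norm (S w)) F"
proof (cases "c < 0")
  case True
  then show ?thesis by (auto intro!: always_eventually less_le_trans[OF _ norm_ge_zero])
next
  case False
  obtain x where x: "c * norm x < norm (blinfun_apply L x)"
    using norm_blinfun_bound[of c L] False \<open>c < norm L\<close> by (force simp: not_less)
  then have "x \<noteq> 0"
    by auto
  have "eventually (\<lambda>w. c * norm x < norm (blinfun_apply (S w) x)) F"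
    using x by (rule order_tendstoD(1)[OF tendsto_norm[OF strong]])
  then show ?thesis
  proof (rule eventually_mono)
    fix w assume "c * norm x < norm (blinfun_apply (S w) x)"
    also have "\<dots> \<le> norm (S w) * norm x"
      by (rule norm_blinfun)
    finally show "c < norm (S w)"
      using \<open>x \<noteq> 0\<close> by simp
  qed
qed

lemma exists_jump_near_at_right:
  fixes R :: "real \<Rightarrow> 'h::real_normed_vector \<Rightarrow>\<^sub>L 'h"
  assumes strong: "\<And>x. ((\<lambda>w. blinfun_apply (R w) x) \<longlongrightarrow> blinfun_apply (R u) x) (at_right u)"
    and "u < v" "c < norm (R v - R u)"
  shows "\<exists>w. u < w \<and> w < v \<and> c < norm (R v - R w)"
proof -
  have "((\<lambda>w. blinfun_apply (R v - R w) x) \<longlongrightarrow> blinfun_apply (R v - R u) x) (at_right u)" for x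
    unfolding blinfun.diff_left by (intro tendsto_diff tendsto_const strong)
  then have "eventually (\<lambda>w. c < norm (R v - R w)) (at_right u)"
    using assms(3) by (rule eventually_norm_blinfun_gt)
  then have "eventually (\<lambda>w. w \<in> {u<..<v} \<and> c < norm (R v - R w)) (at_right u)"
    using eventually_at_right_real[OF \<open>u < v\<close>] by (simp add: eventually_conj_iff)
  from eventually_happens'[OF trivial_limit_at_right_real this] show ?thesis
    by auto
qed

lemma exists_jump_near_at_left:
  fixes R :: "real \<Rightarrow> 'h::real_normed_vector \<Rightarrow>\<^sub>L 'h"
  assumes strong: "\<And>x. ((\<lambda>w. blinfun_apply (R w) x) \<longlongrightarrow> blinfun_apply (R u) x) (at_left u)"
    and "v < u" "c < norm (R u - R v)"
  shows "\<exists>w. v < w \<and> w < u \<and> c < norm (R w - R v)"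
proof -
  have "((\<lambda>w. blinfun_apply (R w - R v) x) \<longlongrightarrow> blinfun_apply (R u - R v) x) (at_left u)" for x
    unfolding blinfun.diff_left by (intro tendsto_diff tendsto_const strong)
  then have "eventually (\<lambda>w. c < norm (R w - R v)) (at_left u)"
    using assms(3) by (rule eventually_norm_blinfun_gt)
  then have "eventually (\<lambda>w. w \<in> {v<..<u} \<and> c < norm (R w - R v)) (at_left u)"
    using eventually_at_left_real[OF \<open>v < u\<close>] by (simp add: eventually_conj_iff)
  from eventually_happens'[OF trivial_limit_at_left_real this] show ?thesis
    by auto
qed

lemma bv_strongly_continuous_at_right:
  fixes R :: "real \<Rightarrow> 'h::real_normed_vector \<Rightarrow>\<^sub>L 'h"
  assumes bv: "bv_on_compacts R" and "0 \<le> u"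
    and strong: "\<And>x. ((\<lambda>w. blinfun_apply (R w) x) \<longlongrightarrow> blinfun_apply (R u) x) (at_right u)"
  shows "(R \<longlongrightarrow> R u) (at_right u)"
proof (rule tendstoI, rule ccontr)
  fix e :: real
  assume "0 < e" and not_near: "\<not> eventually (\<lambda>v. dist (R v) (R u) < e) (at_right u)"
  have pairs: "\<exists>a b. u < a \<and> a < b \<and> b < m \<and> e/2 < norm (R b - R a)" if "u < m" for m
  proof -
    have "\<not> (\<forall>v>u. v < m \<longrightarrow> norm (R v - R u) < e)"
      using not_near that unfolding eventually_at_right_field dist_norm by blast
    then obtain v where v: "u < v" "v < m" "e/2 < norm (R v - R u)"
      using \<open>0 < e\<close> by (auto simp: not_less)
    then show ?thesis
      using exists_jump_near_at_right[OF strong v(1,3)] by force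
  qed
  have "0 < u + 1" "0 < e/2"
    using \<open>0 \<le> u\<close> \<open>0 < e\<close> by auto
  then obtain N where N: "\<And>K a b. \<forall>k<K. 0 < a k \<and> a k < b k \<and> b k < u + 1 \<and> e/2 < norm (R (b k) - R (a k))
      \<Longrightarrow> \<forall>k. Suc k < K \<longrightarrow> b k < a (Suc k) \<Longrightarrow> K \<le> N"
    by (rule bv_finitely_many_large_jumps[OF bv]) (rule that)
  have "\<exists>a b. (\<forall>k<Suc N. u < a k \<and> a k < b k \<and> b k < u + 1 \<and> e/2 < norm (R (b k) - R (a k)))
      \<and> (\<forall>k. Suc k < Suc N \<longrightarrow> b k < a (Suc k))"
    by (rule interval_chain_right[OF less_add_one pairs])
  then obtain a b where "\<forall>k<Suc N. u < a k \<and> a k < b k \<and> b k < u + 1 \<and> e/2 < norm (R (b k) - R (a k))"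
      and chain: "\<forall>k. Suc k < Suc N \<longrightarrow> b k < a (Suc k)"
    by blast
  then have "\<forall>k<Suc N. 0 < a k \<and> a k < b k \<and> b k < u + 1 \<and> e/2 < norm (R (b k) - R (a k))"
    using \<open>0 \<le> u\<close> by force
  then have "Suc N \<le> N"
    using chain by (rule N)
  then show False
    by simp
qed

lemma bv_strongly_continuous_at_left:
  fixes R :: "real \<Rightarrow> 'h::real_normed_vector \<Rightarrow>\<^sub>L 'h"
  assumes bv: "bv_on_compacts R" and "0 < u"
    and strong: "\<And>x. ((\<lambda>w. blinfun_apply (R w) x) \<longlongrightarrow> blinfun_apply (R u) x) (at_left u)"
  shows "(R \<longlongrightarrow> R u) (at_left u)"
proof (rule tendstoI, rule ccontr)
  fix e :: real
  assume "0 < e" and not_near: "\<not> eventually (\<lambda>v. dist (R v) (R u) < e) (at_left u)"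
  have pairs: "\<exists>a b. m < a \<and> a < b \<and> b < u \<and> e/2 < norm (R b - R a)" if "m < u" for m
  proof -
    have "\<not> (\<forall>v>m. v < u \<longrightarrow> norm (R v - R u) < e)"
      using not_near that unfolding eventually_at_left_field dist_norm by blast
    then obtain v where v: "m < v" "v < u" "e/2 < norm (R u - R v)"
      using \<open>0 < e\<close> by (auto simp: not_less norm_minus_commute)
    then show ?thesis
      using exists_jump_near_at_left[OF strong v(2,3)] by force
  qed
  have "0 < e/2"
    using \<open>0 < e\<close> by simp
  with \<open>0 < u\<close> obtain N where N: "\<And>K a b. \<forall>k<K. 0 < a k \<and> a k < b k \<and> b k < u \<and> e/2 < norm (R (b k) - R (a k))
      \<Longrightarrow> \<forall>k. Suc k < K \<longrightarrow> b k < a (Suc k) \<Longrightarrow> K \<le> N"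
    by (rule bv_finitely_many_large_jumps[OF bv]) (rule that)
  have "\<exists>a b. (\<forall>k<Suc N. 0 < a k \<and> a k < b k \<and> b k < u \<and> e/2 < norm (R (b k) - R (a k)))
      \<and> (\<forall>k. Suc k < Suc N \<longrightarrow> b k < a (Suc k))"
    by (rule interval_chain_left[OF \<open>0 < u\<close> pairs])
  then obtain a b where "\<forall>k<Suc N. 0 < a k \<and> a k < b k \<and> b k < u \<and> e/2 < norm (R (b k) - R (a k))"
      and "\<forall>k. Suc k < Suc N \<longrightarrow> b k < a (Suc k)"
    by blast
  then have "Suc N \<le> N"
    by (rule N)
  then show False
    by simp
qed

lemma bv_strongly_continuous_imp_continuous:
  fixes R :: "real \<Rightarrow> 'h::real_normed_vector \<Rightarrow>\<^sub>L 'h"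
  assumes bv: "bv_on_compacts R" and strong: "\<forall>x. continuous_on {0..} (\<lambda>t. blinfun_apply (R t) x)"
  shows "continuous_on {0..} R"
  unfolding continuous_on_def
proof (intro ballI)
  fix u :: real assume "u \<in> {0..}"
  have strong_at: "((\<lambda>w. blinfun_apply (R w) x) \<longlongrightarrow> blinfun_apply (R u) x) (at u within {0..})" for x
    using strong \<open>u \<in> {0..}\<close> by (simp add: continuous_on_def)
  have "{u<..} \<subseteq> {0..}"
    using \<open>u \<in> {0..}\<close> by auto
  then have "((\<lambda>w. blinfun_apply (R w) x) \<longlongrightarrow> blinfun_apply (R u) x) (at_right u)" for x
    by (rule tendsto_within_subset[OF strong_at])
  then have right: "(R \<longlongrightarrow> R u) (at_right u)"
    using \<open>u \<in> {0..}\<close> by (intro bv_strongly_continuous_at_right[OF bv]) auto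
  show "(R \<longlongrightarrow> R u) (at u within {0..})"
  proof (cases "u = 0")
    case True
    then show ?thesis
      using right by (simp add: at_within_Ici_at_right)
  next
    case False
    then have "0 < u"
      using \<open>u \<in> {0..}\<close> by simp
    have at_u: "at u within {0<..} = at u"
      using \<open>0 < u\<close> by (intro at_within_open) auto
    have sub: "{0<..} \<subseteq> {0::real..}"
      by auto
    have "((\<lambda>w. blinfun_apply (R w) x) \<longlongrightarrow> blinfun_apply (R u) x) (at_left u)" for x
      using tendsto_within_subset[OF strong_at[of x] sub] unfolding at_u by (rule tendsto_within_subset) simp
    then have "(R \<longlongrightarrow> R u) (at_left u)"
      by (rule bv_strongly_continuous_at_left[OF bv \<open>0 < u\<close>])
    then have "(R \<longlongrightarrow> R u) (at u)"
      using right by (rule filterlim_split_at)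
    then show ?thesis
      by (rule tendsto_within_subset) simp
  qed
qed

section \<open>Limits as the mesh tends to zero\<close>

definition mesh_limit ::
  "real \<Rightarrow> (nat \<Rightarrow> (nat \<Rightarrow> real) \<Rightarrow> (nat \<Rightarrow> real) \<Rightarrow> 'b::metric_space) \<Rightarrow> 'b \<Rightarrow> bool" where
  "mesh_limit t F L \<longleftrightarrow> (\<forall>e>0. \<exists>\<delta>>0. \<forall>n r s.
     is_partition 0 t n r \<and> mesh n r < \<delta> \<and> (\<forall>i<n. r i \<le> s i \<and> s i \<le> r (Suc i)) \<longrightarrow>
     dist (F n r s) L < e)"

lemma mesh_limit_unique:
  assumes "0 < t" and F: "mesh_limit t F L" and G: "mesh_limit t G L'"
    and FG: "\<And>n r s. is_partition 0 t n r \<Longrightarrow> \<forall>i<n. r i \<le> s i \<and> s i \<le> r (Suc i) \<Longrightarrow> F n r s = G n r s"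
  shows "L = L'"
proof (rule ccontr)
  assume "L \<noteq> L'"
  then have e: "0 < dist L L' / 2"
    by simp
  obtain \<delta>1 where "0 < \<delta>1" and \<delta>1: "\<forall>n r s. is_partition 0 t n r \<and> mesh n r < \<delta>1
      \<and> (\<forall>i<n. r i \<le> s i \<and> s i \<le> r (Suc i)) \<longrightarrow> dist (F n r s) L < dist L L' / 2"
    using F e unfolding mesh_limit_def by blast
  obtain \<delta>2 where "0 < \<delta>2" and \<delta>2: "\<forall>n r s. is_partition 0 t n r \<and> mesh n r < \<delta>2
      \<and> (\<forall>i<n. r i \<le> s i \<and> s i \<le> r (Suc i)) \<longrightarrow> dist (G n r s) L' < dist L L' / 2"
    using G e unfolding mesh_limit_def by blast
  obtain n r where r: "is_partition 0 t n r" "mesh n r < min \<delta>1 \<delta>2"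
    using fine_partition_exists[OF \<open>0 < t\<close>, of "min \<delta>1 \<delta>2"] \<open>0 < \<delta>1\<close> \<open>0 < \<delta>2\<close> by auto
  have tags: "\<forall>i<n. r i \<le> r i \<and> r i \<le> r (Suc i)"
    using partition_mono[OF r(1)] by simp
  have "dist L L' \<le> dist (F n r r) L + dist (G n r r) L'"
    using FG[OF r(1) tags] by (metis dist_commute dist_triangle)
  also have "\<dots> < dist L L' / 2 + dist L L' / 2"
    using r tags by (intro add_strict_mono \<delta>1[rule_format] \<delta>2[rule_format]) auto
  finally show False
    by simp
qed

lemma mesh_limit_compose:
  assumes F: "mesh_limit t F L" and f: "isCont f L"
  shows "mesh_limit t (\<lambda>n r s. f (F n r s)) (f L)"
  unfolding mesh_limit_def
proof (intro allI impI)
  fix e :: real assume "0 < e"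
  then obtain d where "0 < d" and d: "\<And>y. dist y L < d \<Longrightarrow> dist (f y) (f L) < e"
    using f unfolding continuous_at_eps_delta by blast
  then show "\<exists>\<delta>>0. \<forall>n r s. is_partition 0 t n r \<and> mesh n r < \<delta> \<and> (\<forall>i<n. r i \<le> s i \<and> s i \<le> r (Suc i))
      \<longrightarrow> dist (f (F n r s)) (f L) < e"
    using F unfolding mesh_limit_def by (meson d)
qed

lemma integral_partition_sum:
  fixes g :: "real \<Rightarrow> 'b::banach"
  assumes r: "is_partition 0 t n r" and g: "continuous_on {0..t} g"
  shows "integral {0..t} g = (\<Sum>i<n. integral {r i..r (Suc i)} g)"
proof -
  have "integral {0..r k} g = (\<Sum>i<k. integral {r i..r (Suc i)} g)" if "k \<le> n" for k
    using that
  proof (induction k)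
    case 0
    then show ?case using r by (simp add: is_partition_def)
  next
    case (Suc k)
    have "0 \<le> r k" "r k \<le> r (Suc k)" "r (Suc k) \<le> t"
      using partition_range[OF r] partition_mono[OF r, of k "Suc k"] Suc.prems by auto
    moreover have "g integrable_on {0..r (Suc k)}"
      by (rule integrable_continuous_real, rule continuous_on_subset[OF g]) (use calculation in auto)
    ultimately have "integral {0..r k} g + integral {r k..r (Suc k)} g = integral {0..r (Suc k)} g"
      by (intro Henstock_Kurzweil_Integration.integral_combine) auto
    then show ?case
      using Suc by simp
  qed
  from this[of n] show ?thesis
    using r by (simp add: is_partition_def)
qed

lemma norm_scaleR_sub_integral_le:
  fixes g :: "real \<Rightarrow> 'b::banach"
  assumes "a \<le> b" "continuous_on {a..b} g" and bound: "\<And>x. x \<in> {a..b} \<Longrightarrow> norm (g s - g x) \<le> \<epsilon>"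
  shows "norm ((b - a) *\<^sub>R g s - integral {a..b} g) \<le> \<epsilon> * (b - a)"
proof -
  have "(b - a) *\<^sub>R g s - integral {a..b} g = integral {a..b} (\<lambda>x. g s - g x)"
    using assms(1,2) by (simp add: integral_diff integrable_continuous_real)
  also have "norm \<dots> \<le> \<epsilon> * (b - a)"
    by (rule integral_bound) (use assms in \<open>auto intro: continuous_intros\<close>)
  finally show ?thesis .
qed

lemma riemann_sum_dist_integral_le:
  fixes g :: "real \<Rightarrow> 'b::banach"
  assumes r: "is_partition 0 t n r" and g: "continuous_on {0..t} g"
    and s: "\<forall>i<n. r i \<le> s i \<and> s i \<le> r (Suc i)"
    and close: "\<And>i x. i < n \<Longrightarrow> x \<in> {r i..r (Suc i)} \<Longrightarrow> norm (g (s i) - g x) \<le> \<epsilon>"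
  shows "dist (\<Sum>i<n. (r (Suc i) - r i) *\<^sub>R g (s i)) (integral {0..t} g) \<le> \<epsilon> * t"
proof -
  have piece: "norm ((r (Suc i) - r i) *\<^sub>R g (s i) - integral {r i..r (Suc i)} g) \<le> \<epsilon> * (r (Suc i) - r i)"
    if "i < n" for i
  proof (rule norm_scaleR_sub_integral_le)
    have "0 \<le> r i" "r i \<le> r (Suc i)" "r (Suc i) \<le> t"
      using partition_range[OF r] partition_mono[OF r, of i "Suc i"] \<open>i < n\<close> by auto
    then show "r i \<le> r (Suc i)" "continuous_on {r i..r (Suc i)} g"
      by (auto intro: continuous_on_subset[OF g])
  qed (rule close[OF that])
  have "dist (\<Sum>i<n. (r (Suc i) - r i) *\<^sub>R g (s i)) (integral {0..t} g)
      = norm (\<Sum>i<n. (r (Suc i) - r i) *\<^sub>R g (s i) - integral {r i..r (Suc i)} g)"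
    by (simp add: dist_norm integral_partition_sum[OF r g] sum_subtractf)
  also have "\<dots> \<le> (\<Sum>i<n. \<epsilon> * (r (Suc i) - r i))"
    by (rule order.trans[OF norm_sum sum_mono]) (use piece in auto)
  also have "\<dots> = \<epsilon> * (r n - r 0)"
    by (simp only: sum_distrib_left[symmetric] sum_lessThan_telescope)
  finally show ?thesis
    using r by (simp add: is_partition_def)
qed

lemma mesh_limit_riemann_sum:
  fixes g :: "real \<Rightarrow> 'b::banach"
  assumes "0 < t" and g: "continuous_on {0..t} g"
  shows "mesh_limit t (\<lambda>n r s. \<Sum>i<n. (r (Suc i) - r i) *\<^sub>R g (s i)) (integral {0..t} g)"
  unfolding mesh_limit_def
proof (intro allI impI)
  fix e :: real assume "0 < e"
  have "uniformly_continuous_on {0..t} g"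
    using g by (rule compact_uniformly_continuous) simp
  moreover have "0 < e / (2 * t)"
    using \<open>0 < e\<close> \<open>0 < t\<close> by simp
  ultimately obtain d where "0 < d"
    and d: "\<And>x x'. x \<in> {0..t} \<Longrightarrow> x' \<in> {0..t} \<Longrightarrow> dist x' x < d \<Longrightarrow> dist (g x') (g x) < e / (2 * t)"
    unfolding uniformly_continuous_on_def by metis
  have "dist (\<Sum>i<n. (r (Suc i) - r i) *\<^sub>R g (s i)) (integral {0..t} g) < e"
    if r: "is_partition 0 t n r" and "mesh n r < d" and s: "\<forall>i<n. r i \<le> s i \<and> s i \<le> r (Suc i)" for n r s
  proof -
    have "norm (g (s i) - g x) \<le> e / (2 * t)" if "i < n" "x \<in> {r i..r (Suc i)}" for i x
    proof -
      have "\<bar>s i - x\<bar> \<le> mesh n r"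
        using that s partition_step_le_mesh[OF r \<open>i < n\<close>] by auto
      moreover have "r i \<in> {0..t}" "r (Suc i) \<in> {0..t}"
        using partition_range[OF r] \<open>i < n\<close> by auto
      ultimately show ?thesis
        using d[of x "s i"] that s \<open>mesh n r < d\<close> by (auto simp: dist_real_def dist_norm)
    qed
    then have "dist (\<Sum>i<n. (r (Suc i) - r i) *\<^sub>R g (s i)) (integral {0..t} g) \<le> e / (2 * t) * t"
      by (rule riemann_sum_dist_integral_le[OF r g s])
    also have "\<dots> < e"
      using \<open>0 < e\<close> \<open>0 < t\<close> by simp
    finally show ?thesis .
  qed
  then show "\<exists>\<delta>>0. \<forall>n r s. is_partition 0 t n r \<and> mesh n r < \<delta> \<and> (\<forall>i<n. r i \<le> s i \<and> s i \<le> r (Suc i))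
      \<longrightarrow> dist (\<Sum>i<n. (r (Suc i) - r i) *\<^sub>R g (s i)) (integral {0..t} g) < e"
    using \<open>0 < d\<close> by blast
qed

section \<open>Characteristic functions of Riemann--Stieltjes sums\<close>

lemma norm_iexp_diff_le: "cmod (iexp a - iexp b) \<le> \<bar>a - b\<bar>"
proof -
  have "iexp a - iexp b = iexp b * (iexp (a - b) - 1)"
    by (simp add: algebra_simps exp_add[symmetric] of_real_diff)
  also have "cmod \<dots> = cmod (iexp (a - b) - 1)"
    by (simp add: norm_mult)
  also have "\<dots> \<le> \<bar>a - b\<bar>"
    using iexp_approx1[of "a - b" 0] by simp
  finally show ?thesis .
qed

lemma norm_iexp_inner_diff_le:
  assumes "0 \<le> \<epsilon>"
  shows "cmod (iexp (y \<bullet> x) - iexp (y \<bullet> x')) \<le> norm y * \<epsilon> + (if \<epsilon> < norm (x - x') then 2 else 0)"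
proof (cases "\<epsilon> < norm (x - x')")
  case True
  have "cmod (iexp (y \<bullet> x) - iexp (y \<bullet> x')) \<le> cmod (iexp (y \<bullet> x)) + cmod (iexp (y \<bullet> x'))"
    by (rule norm_triangle_ineq4)
  moreover have "0 \<le> norm y * \<epsilon>"
    using assms by simp
  ultimately show ?thesis
    using True by simp
next
  case False
  have "cmod (iexp (y \<bullet> x) - iexp (y \<bullet> x')) \<le> \<bar>y \<bullet> (x - x')\<bar>"
    using norm_iexp_diff_le by (simp add: inner_diff_right)
  also have "\<dots> \<le> norm y * norm (x - x')"
    by (rule Cauchy_Schwarz_ineq2)
  also have "\<dots> \<le> norm y * \<epsilon>"
    using False by (simp add: mult_left_mono)
  finally show ?thesis
    using False by simp
qed

lemma (in prob_space) charfun_diff_le: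
  fixes X Y :: "'a \<Rightarrow> 'h::{real_inner,second_countable_topology}"
  assumes [measurable]: "X \<in> borel_measurable M" "Y \<in> borel_measurable M" and "0 \<le> \<epsilon>"
  shows "cmod (expectation (\<lambda>\<omega>. iexp (y \<bullet> X \<omega>)) - expectation (\<lambda>\<omega>. iexp (y \<bullet> Y \<omega>)))
    \<le> norm y * \<epsilon> + 2 * prob {\<omega>\<in>space M. \<epsilon> < norm (X \<omega> - Y \<omega>)}"
proof -
  define A where "A = {\<omega>\<in>space M. \<epsilon> < norm (X \<omega> - Y \<omega>)}"
  have [measurable]: "A \<in> sets M"
    unfolding A_def by measurable
  have int: "integrable M (\<lambda>\<omega>. iexp (y \<bullet> X \<omega>))" "integrable M (\<lambda>\<omega>. iexp (y \<bullet> Y \<omega>))"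
    by (auto intro: integrable_const_bound[where B=1])
  have "cmod (iexp (y \<bullet> X \<omega>) - iexp (y \<bullet> Y \<omega>)) \<le> norm y * \<epsilon> + 2 * indicator A \<omega>"
    if "\<omega> \<in> space M" for \<omega>
    using norm_iexp_inner_diff_le[OF \<open>0 \<le> \<epsilon>\<close>, of y "X \<omega>" "Y \<omega>"] that by (auto simp: A_def indicator_def split: if_splits)
  then have "cmod (expectation (\<lambda>\<omega>. iexp (y \<bullet> X \<omega>) - iexp (y \<bullet> Y \<omega>)))
      \<le> expectation (\<lambda>\<omega>. norm y * \<epsilon> + 2 * indicator A \<omega>)"
    using int by (intro order.trans[OF integral_norm_bound] integral_mono)
      (auto simp: emeasure_finite less_top[symmetric])
  also have "\<dots> = norm y * \<epsilon> + 2 * prob A"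
    by (simp add: prob_space emeasure_finite less_top[symmetric])
  finally show ?thesis
    using int by (simp add: A_def)
qed

lemma borel_measurable_blinfun_increments_sum:
  fixes Z :: "real \<Rightarrow> 'a \<Rightarrow> 'h::{real_normed_vector,second_countable_topology}"
    and F :: "nat \<Rightarrow> 'h \<Rightarrow>\<^sub>L 'k::{real_normed_vector,second_countable_topology}"
  assumes "\<And>i. i \<le> n \<Longrightarrow> Z (r i) \<in> borel_measurable M"
  shows "(\<lambda>\<omega>. \<Sum>i<n. blinfun_apply (F i) (Z (r (Suc i)) \<omega> - Z (r i) \<omega>)) \<in> borel_measurable M"
proof (rule borel_measurable_sum)
  fix i assume "i \<in> {..<n}"
  then have "(\<lambda>\<omega>. Z (r (Suc i)) \<omega> - Z (r i) \<omega>) \<in> borel_measurable M"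
    using assms by (intro borel_measurable_diff) auto
  moreover have "blinfun_apply (F i) \<in> borel_measurable borel"
    by (intro borel_measurable_continuous_onI blinfun.continuous_on continuous_on_id continuous_on_const)
  ultimately show "(\<lambda>\<omega>. blinfun_apply (F i) (Z (r (Suc i)) \<omega> - Z (r i) \<omega>)) \<in> borel_measurable M"
    by (rule measurable_compose)
qed

lemma (in prob_space) mesh_limit_charfun_stoch_conv_integral:
  fixes Z :: "real \<Rightarrow> 'a \<Rightarrow> 'h::{real_inner,second_countable_topology}"
  assumes Z: "\<And>s. 0 \<le> s \<Longrightarrow> Z s \<in> borel_measurable M" and I: "stoch_conv_integral M R Z t I"
  shows "mesh_limit t
    (\<lambda>n r s. expectation (\<lambda>\<omega>. iexp (y \<bullet> (\<Sum>i<n. blinfun_apply (R (t - s i)) (Z (r (Suc i)) \<omega> - Z (r i) \<omega>)))))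
    (expectation (\<lambda>\<omega>. iexp (y \<bullet> I \<omega>)))"
  unfolding mesh_limit_def
proof (intro allI impI)
  fix e :: real assume "0 < e"
  define \<epsilon> where "\<epsilon> = e / (4 * (norm y + 1))"
  have "0 < \<epsilon>" "0 < e / 4"
    using \<open>0 < e\<close> by (simp_all add: \<epsilon>_def add_nonneg_pos)
  have "norm y * \<epsilon> = e / 4 * (norm y / (norm y + 1))"
    by (simp add: \<epsilon>_def)
  also have "\<dots> \<le> e / 4"
    by (rule mult_left_le) (use \<open>0 < e\<close> in \<open>auto simp: divide_le_eq_1 add_nonneg_pos\<close>)
  finally have "norm y * \<epsilon> \<le> e / 4" .
  have "I \<in> borel_measurable M"
    using I unfolding stoch_conv_integral_def by blast
  obtain \<delta> where "0 < \<delta>" and \<delta>: "\<forall>n r s. is_partition 0 t n r \<and> mesh n r < \<delta>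
      \<and> (\<forall>i<n. r i \<le> s i \<and> s i \<le> r (Suc i)) \<longrightarrow>
      prob {\<omega>\<in>space M. \<epsilon> < norm ((\<Sum>i<n. blinfun_apply (R (t - s i)) (Z (r (Suc i)) \<omega> - Z (r i) \<omega>)) - I \<omega>)}
        < e / 4"
    using I \<open>0 < \<epsilon>\<close> \<open>0 < e / 4\<close> unfolding stoch_conv_integral_def by blast
  have "dist (expectation (\<lambda>\<omega>. iexp (y \<bullet> (\<Sum>i<n. blinfun_apply (R (t - s i)) (Z (r (Suc i)) \<omega> - Z (r i) \<omega>)))))
      (expectation (\<lambda>\<omega>. iexp (y \<bullet> I \<omega>))) < e"
    if r: "is_partition 0 t n r" and "mesh n r < \<delta>" and s: "\<forall>i<n. r i \<le> s i \<and> s i \<le> r (Suc i)" for n r s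
  proof -
    have "(\<lambda>\<omega>. \<Sum>i<n. blinfun_apply (R (t - s i)) (Z (r (Suc i)) \<omega> - Z (r i) \<omega>)) \<in> borel_measurable M"
      using partition_range(1)[OF r] by (intro borel_measurable_blinfun_increments_sum Z)
    note charfun_diff_le[OF this \<open>I \<in> borel_measurable M\<close> less_imp_le[OF \<open>0 < \<epsilon>\<close>], of y]
    moreover have "prob {\<omega>\<in>space M. \<epsilon> < norm ((\<Sum>i<n. blinfun_apply (R (t - s i)) (Z (r (Suc i)) \<omega> - Z (r i) \<omega>)) - I \<omega>)}
        < e / 4"
      using \<delta> r s \<open>mesh n r < \<delta>\<close> by blast
    ultimately show ?thesis
      using \<open>norm y * \<epsilon> \<le> e / 4\<close> \<open>0 < e\<close> unfolding dist_norm by linarith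
  qed
  then show "\<exists>\<delta>>0. \<forall>n r s. is_partition 0 t n r \<and> mesh n r < \<delta> \<and> (\<forall>i<n. r i \<le> s i \<and> s i \<le> r (Suc i)) \<longrightarrow>
      dist (expectation (\<lambda>\<omega>. iexp (y \<bullet> (\<Sum>i<n. blinfun_apply (R (t - s i)) (Z (r (Suc i)) \<omega> - Z (r i) \<omega>)))))
        (expectation (\<lambda>\<omega>. iexp (y \<bullet> I \<omega>))) < e"
    using \<open>0 < \<delta>\<close> by blast
qed

lemma (in prob_space) levy_charfun_increment:
  fixes Z :: "real \<Rightarrow> 'a \<Rightarrow> 'h::{real_inner,second_countable_topology}"
  assumes L: "levy_process M Z"
    and \<psi>: "\<forall>s\<ge>0. \<forall>y. expectation (\<lambda>\<omega>. iexp (y \<bullet> Z s \<omega>)) = exp (complex_of_real s * \<psi> y)"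
    and "0 \<le> s" "s \<le> s'"
  shows "expectation (\<lambda>\<omega>. iexp (y \<bullet> (Z s' \<omega> - Z s \<omega>))) = exp ((s' - s) *\<^sub>R \<psi> y)"
proof -
  have [measurable]: "Z s \<in> borel_measurable M" "Z s' \<in> borel_measurable M" "Z (s' - s) \<in> borel_measurable M"
    using L assms(3,4) unfolding levy_process_def by auto
  have stationary_increments: "\<forall>s\<ge>0. \<forall>h\<ge>0. distr M borel (\<lambda>\<omega>. Z (s + h) \<omega> - Z s \<omega>) = distr M borel (Z h)"
    using L unfolding levy_process_def by blast
  have "distr M borel (\<lambda>\<omega>. Z (s + (s' - s)) \<omega> - Z s \<omega>) = distr M borel (Z (s' - s))"
    using assms(3,4) by (intro stationary_increments[rule_format]) auto
  then have stationary: "distr M borel (\<lambda>\<omega>. Z s' \<omega> - Z s \<omega>) = distr M borel (Z (s' - s))"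
    by simp
  have "expectation (\<lambda>\<omega>. iexp (y \<bullet> (Z s' \<omega> - Z s \<omega>)))
      = integral\<^sup>L (distr M borel (\<lambda>\<omega>. Z s' \<omega> - Z s \<omega>)) (\<lambda>z. iexp (y \<bullet> z))"
    by (simp add: integral_distr)
  also have "\<dots> = expectation (\<lambda>\<omega>. iexp (y \<bullet> Z (s' - s) \<omega>))"
    unfolding stationary by (simp add: integral_distr)
  also have "\<dots> = exp ((s' - s) *\<^sub>R \<psi> y)"
    using \<psi> assms(4) by (simp add: scaleR_conv_of_real)
  finally show ?thesis .
qed

lemma (in prob_space) levy_charfun_increments_sum:
  fixes Z :: "real \<Rightarrow> 'a \<Rightarrow> 'h::{real_inner,second_countable_topology}"
  assumes L: "levy_process M Z"
    and \<psi>: "\<forall>s\<ge>0. \<forall>y. expectation (\<lambda>\<omega>. iexp (y \<bullet> Z s \<omega>)) = exp (complex_of_real s * \<psi> y)"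
    and r: "is_partition a b n r" and "0 \<le> a"
  shows "expectation (\<lambda>\<omega>. iexp (\<Sum>i<n. y i \<bullet> (Z (r (Suc i)) \<omega> - Z (r i) \<omega>)))
    = exp (\<Sum>i<n. (r (Suc i) - r i) *\<^sub>R \<psi> (y i))"
proof -
  have r_nonneg: "0 \<le> r i" if "i \<le> n" for i
    using partition_range(1)[OF r that] \<open>0 \<le> a\<close> by simp
  have r_less: "r i < r (Suc i)" if "i < n" for i
    using r that unfolding is_partition_def by simp
  have [measurable]: "Z (r i) \<in> borel_measurable M" if "i \<le> n" for i
    using L r_nonneg[OF that] unfolding levy_process_def by blast
  have "indep_vars (\<lambda>_. borel) (\<lambda>i \<omega>. Z (r (Suc i)) \<omega> - Z (r i) \<omega>) {..<n}"
    using L r_nonneg r_less unfolding levy_process_def by (meson less_imp_le)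
  then have indep: "indep_vars (\<lambda>_. borel) (\<lambda>i \<omega>. iexp (y i \<bullet> (Z (r (Suc i)) \<omega> - Z (r i) \<omega>))) {..<n}"
    by (rule indep_vars_compose2) (intro borel_measurable_continuous_onI continuous_intros)
  have "expectation (\<lambda>\<omega>. iexp (\<Sum>i<n. y i \<bullet> (Z (r (Suc i)) \<omega> - Z (r i) \<omega>)))
      = expectation (\<lambda>\<omega>. \<Prod>i<n. iexp (y i \<bullet> (Z (r (Suc i)) \<omega> - Z (r i) \<omega>)))"
    by (simp add: of_real_sum sum_distrib_left exp_sum)
  also have "\<dots> = (\<Prod>i<n. expectation (\<lambda>\<omega>. iexp (y i \<bullet> (Z (r (Suc i)) \<omega> - Z (r i) \<omega>))))"
    using indep by (intro indep_vars_lebesgue_integral) (auto intro: integrable_const_bound[where B=1])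
  also have "\<dots> = (\<Prod>i<n. exp ((r (Suc i) - r i) *\<^sub>R \<psi> (y i)))"
    using r_nonneg r_less by (intro prod.cong levy_charfun_increment[OF L \<psi>]) (auto intro: less_imp_le)
  also have "\<dots> = exp (\<Sum>i<n. (r (Suc i) - r i) *\<^sub>R \<psi> (y i))"
    by (simp add: exp_sum)
  finally show ?thesis .
qed

lemma (in prob_space) levy_charfun_blinfun_increments_sum:
  fixes Z :: "real \<Rightarrow> 'a \<Rightarrow> 'h::{real_inner,complete_space,second_countable_topology}"
    and F :: "nat \<Rightarrow> 'h \<Rightarrow>\<^sub>L 'h"
  assumes L: "levy_process M Z"
    and \<psi>: "\<forall>s\<ge>0. \<forall>y. expectation (\<lambda>\<omega>. iexp (y \<bullet> Z s \<omega>)) = exp (complex_of_real s * \<psi> y)"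
    and r: "is_partition a b n r" and "0 \<le> a"
  shows "expectation (\<lambda>\<omega>. iexp (y \<bullet> (\<Sum>i<n. blinfun_apply (F i) (Z (r (Suc i)) \<omega> - Z (r i) \<omega>))))
    = exp (\<Sum>i<n. (r (Suc i) - r i) *\<^sub>R \<psi> (adjoint (blinfun_apply (F i)) y))"
proof -
  have adjoint: "y \<bullet> blinfun_apply G x = adjoint (blinfun_apply G) y \<bullet> x" for G :: "'h \<Rightarrow>\<^sub>L 'h" and x
    using blinfun_adjoint_works[of x G y] by (simp add: inner_commute)
  have "y \<bullet> (\<Sum>i<n. blinfun_apply (F i) (Z (r (Suc i)) \<omega> - Z (r i) \<omega>))
      = (\<Sum>i<n. adjoint (blinfun_apply (F i)) y \<bullet> (Z (r (Suc i)) \<omega> - Z (r i) \<omega>))" for \<omega>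
    unfolding inner_sum_right adjoint ..
  then show ?thesis
    using levy_charfun_increments_sum[OF L \<psi> r \<open>0 \<le> a\<close>] by simp
qed

theorem proposition3:
  fixes M :: "'a measure"
    and DA :: "'h::{real_inner,complete_space,second_countable_topology} set"
    and A :: "'h \<Rightarrow> 'h"
    and a :: "real \<Rightarrow> real"
    and R :: "real \<Rightarrow> 'h \<Rightarrow>\<^sub>L 'h"
    and Z :: "real \<Rightarrow> 'a \<Rightarrow> 'h"
    and \<psi> :: "'h \<Rightarrow> complex"
    and t :: real and lam :: 'h and I :: "'a \<Rightarrow> 'h"
  assumes "prob_space M"
    and "closed_densely_defined_operator DA A"
    and "locally_integrable_Rplus a"
    and "resolvent_family a DA A R"
    and "bv_on_compacts R"
    and "levy_process M Z"
    and "continuous_on UNIV \<psi>" and "\<psi> 0 = 0"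
    and "\<forall>s\<ge>0. \<forall>y. integral\<^sup>L M (\<lambda>\<omega>. exp (\<i> * complex_of_real (y \<bullet> Z s \<omega>)))
                    = exp (complex_of_real s * \<psi> y)"
    and "0 < t"
    and "stoch_conv_integral M R Z t I"
  shows "integral\<^sup>L M (\<lambda>\<omega>. exp (\<i> * complex_of_real (lam \<bullet> I \<omega>)))
           = exp (LINT s:{0..t}|lborel. \<psi> (adjoint (blinfun_apply (R (t - s))) lam))"
proof -
  \<comment> \<open>Only strong continuity and bounded variation of \<open>R\<close> enter.\<close>
  interpret prob_space M by fact
  have "continuous_on {0..} R"
    using assms(4,5) unfolding resolvent_family_def by (blast intro: bv_strongly_continuous_imp_continuous)
  define g where "g s = \<psi> (adjoint (blinfun_apply (R (t - s))) lam)" for s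
  have g: "continuous_on {0..t} g"
    unfolding g_def
    by (intro continuous_on_compose2[OF assms(7)] continuous_on_compose2[OF linear_continuous_on[OF bounded_linear_adjoint_blinfun_apply]]
        continuous_on_compose2[OF \<open>continuous_on {0..} R\<close>] continuous_intros) auto
  have "\<And>s. 0 \<le> s \<Longrightarrow> Z s \<in> borel_measurable M"
    using assms(6) unfolding levy_process_def by blast
  then have "mesh_limit t
      (\<lambda>n r s. expectation (\<lambda>\<omega>. iexp (lam \<bullet> (\<Sum>i<n. blinfun_apply (R (t - s i)) (Z (r (Suc i)) \<omega> - Z (r i) \<omega>)))))
      (expectation (\<lambda>\<omega>. iexp (lam \<bullet> I \<omega>)))"
    using assms(11) by (rule mesh_limit_charfun_stoch_conv_integral)
  moreover have "mesh_limit t (\<lambda>n r s. exp (\<Sum>i<n. (r (Suc i) - r i) *\<^sub>R g (s i))) (exp (integral {0..t} g))"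
    by (rule mesh_limit_compose[OF mesh_limit_riemann_sum[OF \<open>0 < t\<close> g] isCont_exp])
  moreover have "expectation (\<lambda>\<omega>. iexp (lam \<bullet> (\<Sum>i<n. blinfun_apply (R (t - s i)) (Z (r (Suc i)) \<omega> - Z (r i) \<omega>))))
      = exp (\<Sum>i<n. (r (Suc i) - r i) *\<^sub>R g (s i))" if "is_partition 0 t n r" for n r s
    unfolding g_def by (rule levy_charfun_blinfun_increments_sum[OF assms(6,9) that order.refl])
  ultimately have "expectation (\<lambda>\<omega>. iexp (lam \<bullet> I \<omega>)) = exp (integral {0..t} g)"
    by (rule mesh_limit_unique[OF \<open>0 < t\<close>])
  moreover have "(LINT s:{0..t}|lborel. g s) = integral {0..t} g"
    using g by (intro set_borel_integral_eq_integral) (simp add: set_integrable_def borel_integrable_compact)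
  ultimately show ?thesis
    by (simp add: g_def)
qed

end
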